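(* The set $\widehat{c}\setminus c$ is strongly $\mathfrak{c}$-algebrable in the algebra $\ell^\infty$ (with pointwise operations).
   Context: $\ell^\infty$ is the algebra of bounded real sequences with coordinatewise addition, scalar multiplication and multiplication; $c$ is the set of convergent sequences. A Banach limit is a linear functional $L\colon\ell^\infty\to\mathbb R$ such that for every $(x_n)\in\ell^\infty$: (1) if $x_n\ge0$ for all $n$ then $L((x_n))\ge0$; (2) $L((x_2,x_3,\dots))=L((x_1,x_2,\dots))$; (3) $L((1,1,\dots))=1$. $\widehat{c}$ is the set of $x\in\ell^\infty$ for which there is $s\in\mathbb R$ with $L(x)=s$ for every Banach limit $L$. A subset $A$ of a commutative algebra $\mathcal L$ is strongly $\kappa$-algebrable if $A\cup\{0\}$ contains a $\kappa$-generated subalgebra (minimal number of generators of cardinality $\kappa$) which is isomorphic to a free algebra; equivalently, there is a set $Z\subset\mathcal L$ of cardinality $\kappa$ such that for every $n$, every non-zero polynomial $P$ in $n$ variables without constant term and all distinct $z_1,\dots,z_n\in Z$, $P(z_1,\dots,z_n)\in A\setminus\{0\}$. $\mathfrak c$ is the cardinality of the continuum. *)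

theory Defs
  imports "HOL-Analysis.Analysis" "HOL-Library.Equipollence"
begin

definition linf :: "(nat \<Rightarrow> real) set" where
  "linf = {x. bounded (range x)}"

definition conv_seqs :: "(nat \<Rightarrow> real) set" where
  "conv_seqs = {x. convergent x}"

definition banach_limit :: "((nat \<Rightarrow> real) \<Rightarrow> real) \<Rightarrow> bool" where
  "banach_limit L \<longleftrightarrow>
     (\<forall>x\<in>linf. \<forall>y\<in>linf. L (\<lambda>n. x n + y n) = L x + L y) \<and>
     (\<forall>x\<in>linf. \<forall>a. L (\<lambda>n. a * x n) = a * L x) \<and>
     (\<forall>x\<in>linf. (\<forall>n. x n \<ge> 0) \<longrightarrow> L x \<ge> 0) \<and>
     (\<forall>x\<in>linf. L (\<lambda>n. x (Suc n)) = L x) \<and>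
     L (\<lambda>n. 1) = 1"

definition c_hat :: "(nat \<Rightarrow> real) set" where
  "c_hat = {x \<in> linf. \<exists>s. \<forall>L. banach_limit L \<longrightarrow> L x = s}"

text \<open>A real polynomial in the variables X_0, ..., X_(n-1) is given by its coefficient
  function on exponent vectors (nat => nat), with finite support consisting of exponent
  vectors that vanish from index n on. "Without constant term" means the coefficient of the
  zero exponent vector is 0.\<close>

definition poly_nc :: "nat \<Rightarrow> ((nat \<Rightarrow> nat) \<Rightarrow> real) \<Rightarrow> bool" where
  "poly_nc n a \<longleftrightarrow> finite {e. a e \<noteq> 0} \<and>
     (\<forall>e. a e \<noteq> 0 \<longrightarrow> (\<forall>i\<ge>n. e i = 0)) \<and> a (\<lambda>_. 0) = 0"

definition poly_eval :: "nat \<Rightarrow> ((nat \<Rightarrow> nat) \<Rightarrow> real) \<Rightarrow> (nat \<Rightarrow> nat \<Rightarrow> real) \<Rightarrow> nat \<Rightarrow> real" where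
  "poly_eval n a z = (\<lambda>k. \<Sum>e\<in>{e. a e \<noteq> 0}. a e * (\<Prod>i<n. (z i k) ^ (e i)))"

definition strongly_algebrable_linf :: "(nat \<Rightarrow> real) set \<Rightarrow> 'b set \<Rightarrow> bool" where
  "strongly_algebrable_linf A K \<longleftrightarrow>
     (\<exists>Z. Z \<subseteq> linf \<and> Z \<approx> K \<and>
        (\<forall>n a z. poly_nc n a \<and> (\<exists>e. a e \<noteq> 0) \<and> inj_on z {..<n} \<and> z ` {..<n} \<subseteq> Z
            \<longrightarrow> poly_eval n a z \<in> A - {\<lambda>_. 0}))"

end

theory Submission
  imports Defs "HOL-Real_Asymp.Real_Asymp"
begin

text \<open>
  The generators are the sequences gen r (r real), supported on the slots
  2 ^ (1 + <l, N, j>), where gen r takes the value exp (- N e^(r l)). A nonzero polynomial without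
  constant term in distinct generators is again bounded and supported on the slots. The slots are
  powers of two, so for every m all but finitely many windows of m consecutive integers meet them
  at most once; summing m shifted copies of the sequence therefore gives m L(y) <= sup |y| for every
  Banach limit L, whence L(y) = 0 and y lies in c_hat.

  At slot (l, N, j) the monomial with exponent vector e takes the value
  exp (- N (e_1 e^(r_1 l) + ... + e_n e^(r_n l))). For large l these exponents are pairwise distinct
  across the monomials, since the r_i are distinct; then for large N the resulting exponential sum
  is nonzero, its dominant term being the one with the smallest exponent. This nonzero value recurs
  for every j, while the sequence vanishes at all odd indices, so it does not converge.
\<close>

lemma linf_iff: "x \<in> linf \<longleftrightarrow> (\<exists>M. \<forall>n. \<bar>x n\<bar> \<le> M)"
  unfolding linf_def bounded_iff by auto

lemma linf_const: "(\<lambda>n. c) \<in> linf"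
  unfolding linf_iff by blast

lemma linf_reindex: "x \<in> linf \<Longrightarrow> (\<lambda>n. x (f n)) \<in> linf"
  unfolding linf_iff by blast

lemma linf_uminus: "x \<in> linf \<Longrightarrow> (\<lambda>n. - x n) \<in> linf"
  unfolding linf_iff by auto

lemma linf_add: "x \<in> linf \<Longrightarrow> y \<in> linf \<Longrightarrow> (\<lambda>n. x n + y n) \<in> linf"
  unfolding linf_iff by (meson abs_triangle_ineq add_mono order_trans)

lemma linf_mult: "x \<in> linf \<Longrightarrow> y \<in> linf \<Longrightarrow> (\<lambda>n. x n * y n) \<in> linf"
  unfolding linf_def Bseq_eq_bounded[symmetric] by (simp add: Bseq_mult)

lemma linf_sum: "(\<And>i. i \<in> A \<Longrightarrow> u i \<in> linf) \<Longrightarrow> (\<lambda>n. \<Sum>i\<in>A. u i n) \<in> linf"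
  by (induction A rule: infinite_finite_induct) (auto intro: linf_const linf_add)

lemma linf_prod: "(\<And>i. i \<in> A \<Longrightarrow> u i \<in> linf) \<Longrightarrow> (\<lambda>n. \<Prod>i\<in>A. u i n) \<in> linf"
  by (induction A rule: infinite_finite_induct) (auto intro: linf_const linf_mult)

lemma linf_power: "x \<in> linf \<Longrightarrow> (\<lambda>n. x n ^ k) \<in> linf"
  using linf_prod[of "{..<k}" "\<lambda>_. x"] by simp

context
  fixes L :: "(nat \<Rightarrow> real) \<Rightarrow> real"
  assumes L: "banach_limit L"
begin

lemma banach_limit_add: "x \<in> linf \<Longrightarrow> y \<in> linf \<Longrightarrow> L (\<lambda>n. x n + y n) = L x + L y"
  using L unfolding banach_limit_def by blast

lemma banach_limit_cmult: "x \<in> linf \<Longrightarrow> L (\<lambda>n. a * x n) = a * L x"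
  using L unfolding banach_limit_def by blast

lemma banach_limit_nonneg: "x \<in> linf \<Longrightarrow> (\<And>n. x n \<ge> 0) \<Longrightarrow> L x \<ge> 0"
  using L unfolding banach_limit_def by blast

lemma banach_limit_shift: "x \<in> linf \<Longrightarrow> L (\<lambda>n. x (Suc n)) = L x"
  using L unfolding banach_limit_def by blast

lemma banach_limit_const: "L (\<lambda>n. c) = c"
  using L banach_limit_cmult[OF linf_const, of c 1] unfolding banach_limit_def by simp

lemma banach_limit_uminus: "x \<in> linf \<Longrightarrow> L (\<lambda>n. - x n) = - L x"
  using banach_limit_cmult[of x "-1"] by simp

lemma banach_limit_mono:
  assumes x: "x \<in> linf" and y: "y \<in> linf" and le: "\<And>n. x n \<le> y n"
  shows "L x \<le> L y"
proof -
  have "0 \<le> L (\<lambda>n. y n + - x n)"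
    using le by (intro banach_limit_nonneg linf_add y linf_uminus x) auto
  also have "\<dots> = L y - L x"
    using banach_limit_add[OF y linf_uminus[OF x]] banach_limit_uminus[OF x] by simp
  finally show ?thesis by simp
qed

lemma banach_limit_shift_by: "x \<in> linf \<Longrightarrow> L (\<lambda>n. x (n + j)) = L x"
proof (induction j)
  case (Suc j)
  then show ?case
    using banach_limit_shift[OF linf_reindex[OF Suc.prems], of "\<lambda>n. n + j"] by simp
qed simp

lemma banach_limit_sum:
  "finite A \<Longrightarrow> (\<And>i. i \<in> A \<Longrightarrow> u i \<in> linf) \<Longrightarrow> L (\<lambda>n. \<Sum>i\<in>A. u i n) = (\<Sum>i\<in>A. L (u i))"
proof (induction A rule: finite_induct)
  case empty
  then show ?case using banach_limit_const[of 0] by simp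
next
  case (insert i A)
  then show ?case
    using banach_limit_add[OF _ linf_sum, of "u i" A u] by simp
qed

end

definition sparse_set :: "nat set \<Rightarrow> bool" where
  "sparse_set S \<longleftrightarrow> (\<forall>m. \<exists>T. \<forall>t\<ge>T. \<forall>i<m. \<forall>j<m. t + i \<in> S \<longrightarrow> t + j \<in> S \<longrightarrow> i = j)"

lemma sparse_set_subset: "sparse_set S \<Longrightarrow> R \<subseteq> S \<Longrightarrow> sparse_set R"
  unfolding sparse_set_def by (meson subsetD)

lemma sparse_set_powers_of_two: "sparse_set (range (\<lambda>m. 2 ^ m))"
  unfolding sparse_set_def
proof (intro allI exI impI)
  fix m t i j :: nat
  assume "m \<le> t"
  have no_gap: False
    if "(2::nat) ^ a = t + i" "2 ^ b = t + j" "j < m" "a < b" for a b i j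
  proof -
    have "2 * 2 ^ a \<le> (2::nat) ^ b"
      using power_increasing[of "Suc a" b "2::nat"] \<open>a < b\<close> by simp
    then show False using that \<open>m \<le> t\<close> by linarith
  qed
  assume "i < m" "j < m" "t + i \<in> range (\<lambda>m. 2 ^ m)" "t + j \<in> range (\<lambda>m. 2 ^ m)"
  then obtain a b where "(2::nat) ^ a = t + i" "(2::nat) ^ b = t + j"
    by (metis rangeE)
  with no_gap[of a i b j] no_gap[of b j a i] \<open>i < m\<close> \<open>j < m\<close> show "i = j"
    by (metis add_left_cancel linorder_neqE_nat)
qed

lemma sum_window_le_if_sparse:
  fixes x :: "nat \<Rightarrow> real"
  assumes unique: "\<And>i j. i < m \<Longrightarrow> j < m \<Longrightarrow> t + i \<in> S \<Longrightarrow> t + j \<in> S \<Longrightarrow> i = j"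
    and supp: "\<And>k. x k \<noteq> 0 \<Longrightarrow> k \<in> S" and bound: "\<And>k. x k \<le> M" and "0 \<le> M"
  shows "(\<Sum>i<m. x (t + i)) \<le> M"
proof -
  define I where "I = {i. i < m \<and> t + i \<in> S}"
  have "card I \<le> 1"
    using unique by (auto simp: I_def card_le_Suc0_iff_eq)
  have "(\<Sum>i<m. x (t + i)) = (\<Sum>i\<in>I. x (t + i))"
    using supp by (intro sum.mono_neutral_right) (auto simp: I_def)
  also have "\<dots> \<le> card I * M"
    using bound by (intro sum_bounded_above) auto
  also have "\<dots> \<le> M"
    using \<open>card I \<le> 1\<close> \<open>0 \<le> M\<close> by (simp add: mult_left_le_one_le)
  finally show ?thesis .
qed

lemma banach_limit_le_0_if_sparse_support:
  assumes L: "banach_limit L" and x: "x \<in> linf"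
    and supp: "\<And>k. x k \<noteq> 0 \<Longrightarrow> k \<in> S" and "sparse_set S"
  shows "L x \<le> 0"
proof -
  obtain M where M: "\<And>k. \<bar>x k\<bar> \<le> M" using x linf_iff by blast
  then have "0 \<le> M" by (meson abs_ge_zero order_trans)
  have "m * L x \<le> M" for m :: nat
  proof -
    obtain T where T: "\<And>t i j. T \<le> t \<Longrightarrow> i < m \<Longrightarrow> j < m \<Longrightarrow> t + i \<in> S \<Longrightarrow> t + j \<in> S \<Longrightarrow> i = j"
      using \<open>sparse_set S\<close> unfolding sparse_set_def by meson
    have "m * L x = (\<Sum>i<m. L (\<lambda>n. x (n + (T + i))))"
      using banach_limit_shift_by[OF L x] by simp
    also have "\<dots> = L (\<lambda>n. \<Sum>i<m. x (n + T + i))"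
      using banach_limit_sum[OF L, of "{..<m}"] linf_reindex[OF x] by (simp add: add.assoc)
    also have "\<dots> \<le> L (\<lambda>n. M)"
    proof (intro banach_limit_mono[OF L] linf_sum linf_reindex[OF x] linf_const)
      show "(\<Sum>i<m. x (n + T + i)) \<le> M" for n
        using T[of "n + T"] supp M \<open>0 \<le> M\<close>
        by (intro sum_window_le_if_sparse[where S = S]) (auto simp: abs_le_iff)
    qed
    also have "\<dots> = M" by (rule banach_limit_const[OF L])
    finally show ?thesis .
  qed
  show ?thesis
  proof (rule ccontr)
    assume "\<not> L x \<le> 0"
    moreover obtain m :: nat where "M / L x < m" using reals_Archimedean2 by blast
    ultimately have "M < m * L x" by (simp add: divide_less_eq)
    with \<open>m * L x \<le> M\<close> show False by simp
  qed
qed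

lemma banach_limit_eq_0_if_sparse_support:
  assumes "banach_limit L" "x \<in> linf" "\<And>k. x k \<noteq> 0 \<Longrightarrow> k \<in> S" "sparse_set S"
  shows "L x = 0"
proof -
  have "L (\<lambda>n. - x n) \<le> 0"
    using assms by (intro banach_limit_le_0_if_sparse_support[where S = S] linf_uminus) auto
  then show ?thesis
    using banach_limit_le_0_if_sparse_support[OF assms] banach_limit_uminus[OF assms(1,2)] by simp
qed

lemma exp_sum_eventually_nonzero:
  fixes \<gamma> c :: "'a \<Rightarrow> real"
  assumes "finite E" "inj_on \<gamma> E" "e0 \<in> E" "c e0 \<noteq> 0"
  shows "\<forall>\<^sub>F s in at_top. (\<Sum>e\<in>E. c e * exp (\<gamma> e * s)) \<noteq> 0"
proof -
  define F where "F = {e \<in> E. c e \<noteq> 0}"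
  have "finite F" "e0 \<in> F" using assms by (auto simp: F_def)
  then have "Max (\<gamma> ` F) \<in> \<gamma> ` F" by (intro Max_in) auto
  then obtain e1 where e1: "e1 \<in> F" "\<gamma> e1 = Max (\<gamma> ` F)" by (metis imageE)
  have less: "\<gamma> e < \<gamma> e1" if "e \<in> F" "e \<noteq> e1" for e
  proof -
    have "\<gamma> e \<le> \<gamma> e1"
      using e1(2) \<open>finite F\<close> \<open>e \<in> F\<close> by simp
    moreover have "\<gamma> e \<noteq> \<gamma> e1"
      using inj_onD[OF assms(2)] that e1(1) by (auto simp: F_def)
    ultimately show ?thesis by simp
  qed
  have exp_decay: "((\<lambda>s. exp (d * s)) \<longlongrightarrow> 0) at_top" if "d < 0" for d :: real
    using that by real_asymp
  \<comment> \<open>After dividing by the dominant exponential the sum tends to the coefficient of e1.\<close>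
  have "((\<lambda>s. \<Sum>e\<in>F. c e * exp ((\<gamma> e - \<gamma> e1) * s)) \<longlongrightarrow> (\<Sum>e\<in>F. if e = e1 then c e1 else 0)) at_top"
    using less by (intro tendsto_sum) (auto intro!: tendsto_mult_right_zero exp_decay)
  then have "\<forall>\<^sub>F s in at_top. (\<Sum>e\<in>F. c e * exp ((\<gamma> e - \<gamma> e1) * s)) \<noteq> 0"
    using e1 \<open>finite F\<close> by (intro tendsto_imp_eventually_ne) (auto simp: F_def)
  then show ?thesis
  proof eventually_elim
    case (elim s)
    have "(\<Sum>e\<in>E. c e * exp (\<gamma> e * s)) = (\<Sum>e\<in>F. c e * exp (\<gamma> e * s))"
      using assms(1) by (intro sum.mono_neutral_right) (auto simp: F_def)
    also have "\<dots> = exp (\<gamma> e1 * s) * (\<Sum>e\<in>F. c e * exp ((\<gamma> e - \<gamma> e1) * s))"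
      by (simp add: sum_distrib_left left_diff_distrib exp_diff)
    finally show ?case using elim by simp
  qed
qed

lemma eventually_inj_on_exp_weights:
  fixes r :: "nat \<Rightarrow> real"
  assumes "finite E" "inj_on r {..<n}" "\<And>e i. e \<in> E \<Longrightarrow> n \<le> i \<Longrightarrow> e i = 0"
  shows "\<forall>\<^sub>F s in at_top. inj_on (\<lambda>e. \<Sum>i<n. real (e i) * exp (r i * s)) E"
proof -
  have "\<forall>\<^sub>F s in at_top. e \<noteq> e' \<longrightarrow>
          (\<Sum>i<n. real (e i) * exp (r i * s)) \<noteq> (\<Sum>i<n. real (e' i) * exp (r i * s))"
    if "e \<in> E" "e' \<in> E" for e e'
  proof (cases "e = e'")
    case False
    then obtain i where "e i \<noteq> e' i" by auto
    with assms(3) that have "i < n" by (metis not_le)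
    then have "\<forall>\<^sub>F s in at_top. (\<Sum>i<n. (real (e i) - real (e' i)) * exp (r i * s)) \<noteq> 0"
      using \<open>e i \<noteq> e' i\<close> assms(2) by (intro exp_sum_eventually_nonzero) auto
    then show ?thesis
      by eventually_elim (simp add: left_diff_distrib sum_subtractf)
  qed simp
  then have "\<forall>\<^sub>F s in at_top. \<forall>(e, e')\<in>E \<times> E. e \<noteq> e' \<longrightarrow>
          (\<Sum>i<n. real (e i) * exp (r i * s)) \<noteq> (\<Sum>i<n. real (e' i) * exp (r i * s))"
    using assms(1) by (intro eventually_ball_finite) auto
  then show ?thesis
    by eventually_elim (auto simp: inj_on_def)
qed

lemma poly_nc_monomial_nonconstant:
  assumes "poly_nc n a" "a e \<noteq> 0"
  shows "\<exists>i<n. e i \<noteq> 0"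
proof (rule ccontr)
  assume "\<not> (\<exists>i<n. e i \<noteq> 0)"
  with assms have "e = (\<lambda>_. 0)"
    unfolding poly_nc_def by (metis not_le)
  with assms show False
    unfolding poly_nc_def by simp
qed

lemma poly_eval_eq_0:
  assumes "poly_nc n a" "\<And>i. i < n \<Longrightarrow> z i k = 0"
  shows "poly_eval n a z k = 0"
  unfolding poly_eval_def
proof (intro sum.neutral ballI)
  fix e assume "e \<in> {e. a e \<noteq> 0}"
  then obtain i where "i < n" "e i \<noteq> 0"
    using poly_nc_monomial_nonconstant[OF assms(1)] by blast
  then show "a e * (\<Prod>i<n. z i k ^ e i) = 0"
    using assms(2) by (auto simp: prod_zero_iff)
qed

lemma poly_eval_linf: "(\<And>i. i < n \<Longrightarrow> z i \<in> linf) \<Longrightarrow> poly_eval n a z \<in> linf"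
  unfolding poly_eval_def by (intro linf_sum linf_mult linf_const linf_prod linf_power) auto

fun slot :: "nat \<times> nat \<times> nat \<Rightarrow> nat" where
  "slot (l, N, j) = 2 ^ Suc (prod_encode (l, prod_encode (N, j)))"

lemma inj_slot: "inj slot"
  by (rule injI) (auto simp: power_inject_exp prod_encode_eq)

lemma even_slot: "even (slot p)"
  by (cases p) auto

lemma slot_ge: "j \<le> slot (l, N, j)"
proof -
  have "j \<le> prod_encode (l, prod_encode (N, j))"
    using le_prod_encode_2 order_trans by blast
  also have "\<dots> < slot (l, N, j)"
    using less_exp[of "prod_encode (l, prod_encode (N, j))"] by (simp del: less_exp)
  finally show ?thesis by simp
qed

lemma range_slot_subset: "range slot \<subseteq> range (\<lambda>m. 2 ^ m)"
  by (auto simp del: power_Suc)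

definition gen :: "real \<Rightarrow> nat \<Rightarrow> real" where
  "gen r k = (if k \<in> range slot then (case inv slot k of (l, N, _) \<Rightarrow> exp (- exp (r * l) * N)) else 0)"

lemma gen_slot: "gen r (slot (l, N, j)) = exp (- exp (r * l) * N)"
  by (simp add: gen_def inv_f_f[OF inj_slot] del: slot.simps)

lemma gen_eq_0: "k \<notin> range slot \<Longrightarrow> gen r k = 0"
  by (simp add: gen_def)

lemma gen_linf: "gen r \<in> linf"
  unfolding linf_iff by (rule exI[of _ 1]) (auto simp: gen_def split: prod.split)

lemma inj_gen: "inj gen"
proof (rule injI)
  fix r r' assume "gen r = gen r'"
  then have "gen r (slot (1, 1, 0)) = gen r' (slot (1, 1, 0))" by simp
  then show "r = r'" by (simp only: gen_slot) simp
qed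

lemma poly_eval_gen_slot:
  assumes "\<And>i. i < n \<Longrightarrow> z i = gen (r i)"
  shows "poly_eval n a z (slot (l, N, j)) =
    (\<Sum>e | a e \<noteq> 0. a e * exp (- (\<Sum>i<n. real (e i) * exp (r i * l)) * N))"
  unfolding poly_eval_def
proof (intro sum.cong refl arg_cong[where f = "(*) _"])
  fix e :: "nat \<Rightarrow> nat"
  have "(\<Prod>i<n. z i (slot (l, N, j)) ^ e i) = (\<Prod>i<n. exp (real (e i) * (- exp (r i * l) * N)))"
    using assms by (intro prod.cong refl) (simp add: gen_slot exp_of_nat_mult[symmetric] del: slot.simps)
  also have "\<dots> = exp (- (\<Sum>i<n. real (e i) * exp (r i * l)) * N)"
    by (simp add: exp_sum[symmetric] sum_distrib_right sum_negf[symmetric] mult.assoc)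
  finally show "(\<Prod>i<n. z i (slot (l, N, j)) ^ e i) = \<dots>" .
qed

lemma not_convergent_if_frequently_distinct_values:
  fixes x :: "nat \<Rightarrow> 'a::t1_space"
  assumes "\<exists>\<^sub>F k in sequentially. x k = a" "\<exists>\<^sub>F k in sequentially. x k = b" "a \<noteq> b"
  shows "\<not> convergent x"
proof
  assume "convergent x"
  then obtain L where "x \<longlonglongrightarrow> L"
    unfolding convergent_def ..
  then have "L = a" "L = b"
    using limit_frequently_eq[OF sequentially_bot assms(1)] limit_frequently_eq[OF sequentially_bot assms(2)]
    by blast+
  with assms(3) show False by simp
qed

lemma eventually_at_top_real_natE:
  assumes "\<forall>\<^sub>F s in at_top. P (s :: real)"
  obtains n :: nat where "P (real n)"
proof -
  obtain s0 where "\<And>s. s0 \<le> s \<Longrightarrow> P s"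
    using assms unfolding eventually_at_top_linorder by blast
  moreover obtain n :: nat where "s0 \<le> real n"
    using real_arch_simple by blast
  ultimately show ?thesis using that by blast
qed

lemma exp_weight_sum_nonzeroE:
  fixes r :: "nat \<Rightarrow> real"
  assumes "poly_nc n a" "a \<noteq> (\<lambda>_. 0)" "inj_on r {..<n}"
  obtains l N :: nat
  where "(\<Sum>e | a e \<noteq> 0. a e * exp (- (\<Sum>i<n. real (e i) * exp (r i * l)) * N)) \<noteq> 0"
proof -
  define E where "E = {e. a e \<noteq> 0}"
  define w where "w l e = (\<Sum>i<n. real (e i) * exp (r i * l))" for l :: real and e
  have "finite E" and supp: "\<And>e i. e \<in> E \<Longrightarrow> n \<le> i \<Longrightarrow> e i = 0"
    using assms(1) by (auto simp: E_def poly_nc_def)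
  have "\<forall>\<^sub>F l in at_top. inj_on (w l) E"
    unfolding w_def using supp by (rule eventually_inj_on_exp_weights[OF \<open>finite E\<close> assms(3)])
  then obtain l :: nat where "inj_on (w l) E"
    by (rule eventually_at_top_real_natE)
  then have "inj_on (\<lambda>e. - w l e) E"
    by (auto simp: inj_on_def)
  then have "\<forall>\<^sub>F s in at_top. (\<Sum>e\<in>E. a e * exp (- w l e * s)) \<noteq> 0"
  proof -
    obtain e0 where "a e0 \<noteq> 0" using assms(2) by auto
    then show ?thesis
      using \<open>finite E\<close> \<open>inj_on (\<lambda>e. - w l e) E\<close>
      by (intro exp_sum_eventually_nonzero[of E _ e0]) (auto simp: E_def)
  qed
  then obtain N :: nat where "(\<Sum>e\<in>E. a e * exp (- w l e * N)) \<noteq> 0"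
    by (rule eventually_at_top_real_natE)
  then show ?thesis
    by (intro that[of l N]) (simp add: E_def w_def)
qed

lemma poly_eval_gen_eq_0:
  assumes "poly_nc n a" "\<And>i. i < n \<Longrightarrow> z i = gen (r i)" "k \<notin> range slot"
  shows "poly_eval n a z k = 0"
  using assms(1) by (rule poly_eval_eq_0) (simp add: assms(2,3) gen_eq_0)

lemma poly_eval_gen_in_c_hat:
  assumes "poly_nc n a" and z: "\<And>i. i < n \<Longrightarrow> z i = gen (r i)"
  shows "poly_eval n a z \<in> c_hat"
proof -
  let ?y = "poly_eval n a z"
  have "?y \<in> linf"
    using z gen_linf by (intro poly_eval_linf) simp
  have "?y k = 0" if "k \<notin> range slot" for k
    using assms that by (rule poly_eval_gen_eq_0)
  then have supp: "?y k \<noteq> 0 \<Longrightarrow> k \<in> range slot" for k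
    by blast
  have "sparse_set (range slot)"
    by (rule sparse_set_subset[OF sparse_set_powers_of_two range_slot_subset])
  have "L ?y = 0" if "banach_limit L" for L
    using that \<open>?y \<in> linf\<close> supp \<open>sparse_set (range slot)\<close>
    by (rule banach_limit_eq_0_if_sparse_support)
  with \<open>?y \<in> linf\<close> show ?thesis
    unfolding c_hat_def by blast
qed

lemma poly_eval_gen_not_convergent:
  assumes "poly_nc n a" "a \<noteq> (\<lambda>_. 0)" "inj_on r {..<n}"
    and z: "\<And>i. i < n \<Longrightarrow> z i = gen (r i)"
  shows "\<not> convergent (poly_eval n a z)"
proof -
  let ?y = "poly_eval n a z"
  obtain l N :: nat
    where "(\<Sum>e | a e \<noteq> 0. a e * exp (- (\<Sum>i<n. real (e i) * exp (r i * l)) * N)) \<noteq> 0"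
    using assms(1-3) by (rule exp_weight_sum_nonzeroE)
  moreover define c where "c = (\<Sum>e | a e \<noteq> 0. a e * exp (- (\<Sum>i<n. real (e i) * exp (r i * l)) * N))"
  ultimately have "c \<noteq> 0" by simp
  have "\<exists>\<^sub>F k in sequentially. ?y k = c"
    unfolding frequently_sequentially
  proof
    fix M
    have "?y (slot (l, N, M)) = c"
      unfolding c_def using z by (rule poly_eval_gen_slot)
    then show "\<exists>k\<ge>M. ?y k = c"
      using slot_ge by blast
  qed
  moreover have "\<exists>\<^sub>F k in sequentially. ?y k = 0"
    unfolding frequently_sequentially
  proof
    fix M
    have "2 * M + 1 \<notin> range slot"
      using even_slot by (metis even_add even_mult_iff even_numeral odd_one rangeE)
    with assms(1) z have "?y (2 * M + 1) = 0"
      by (rule poly_eval_gen_eq_0)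
    then show "\<exists>k\<ge>M. ?y k = 0"
      by (intro exI[of _ "2 * M + 1"]) simp
  qed
  ultimately show ?thesis
    using \<open>c \<noteq> 0\<close> by (rule not_convergent_if_frequently_distinct_values)
qed

theorem theorem3p3:
  shows "strongly_algebrable_linf (c_hat - conv_seqs) (UNIV :: real set)"
proof -
  have "poly_eval n a z \<in> c_hat - conv_seqs - {\<lambda>_. 0}"
    if "poly_nc n a" "\<exists>e. a e \<noteq> 0" "inj_on z {..<n}" "z ` {..<n} \<subseteq> range gen" for n a z
  proof -
    define r where "r i = inv gen (z i)" for i
    have z: "z i = gen (r i)" if "i < n" for i
      using that \<open>z ` {..<n} \<subseteq> range gen\<close> by (auto simp: r_def f_inv_into_f)
    have "inj_on r {..<n}"
      by (rule inj_onI) (metis \<open>inj_on z {..<n}\<close> inj_onD lessThan_iff z)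
    moreover have "a \<noteq> (\<lambda>_. 0)"
      using \<open>\<exists>e. a e \<noteq> 0\<close> by auto
    ultimately have "\<not> convergent (poly_eval n a z)"
      using \<open>poly_nc n a\<close> z by (intro poly_eval_gen_not_convergent)
    moreover have "poly_eval n a z \<in> c_hat"
      using \<open>poly_nc n a\<close> z by (rule poly_eval_gen_in_c_hat)
    ultimately show ?thesis
      by (auto simp: conv_seqs_def convergent_const)
  qed
  moreover have "range gen \<subseteq> linf"
    using gen_linf by blast
  moreover have "range gen \<approx> (UNIV :: real set)"
    using inj_on_image_eqpoll_self[OF inj_gen] .
  ultimately show ?thesis
    unfolding strongly_algebrable_linf_def by blast
qed

end
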